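(* With the notation of the context, if $B\subseteq H$ is a set that is non-meager with respect to $\tau$ and has the Baire property with respect to $\tau$, then for every $m\in\omega$ there are distinct $x,y\in P_m$ such that $(B+x)\cap(B+y)\neq\emptyset$.
   Context: Work in $2^\omega$ with coordinatewise addition mod 2 (also used for finite 0-1 sequences of equal domain). Fix integers $0=n_0<n_1<n_2<\cdots$ and sets $C_i\subseteq 2^{[n_i,n_{i+1})}$ such that for every $i$ and all $s_0,\ldots,s_{n_i}\in 2^{[n_i,n_{i+1})}$ both $\bigcap_{k\le n_i}(C_i+s_k)$ and $\bigcap_{k\le n_i}((2^{[n_i,n_{i+1})}\setminus C_i)+s_k)$ are nonempty. Let $H=\{x\in 2^\omega: x\restriction[n_i,n_{i+1})\in C_i \text{ for all } i\}$. Fix a sequence $\langle P_m:m\in\omega\rangle$ of nonempty perfect subsets of $2^\omega$; let $P_m^*=\{x+y:x,y\in P_m\}$ and $T_m^*=\{x\restriction k: x\in P_m^*, k\in\omega\}$. A tree mapping with domain $n\ge1$ is a partial function $\pi$ from $\{(k,\ell):k<\ell<n\}$ to $\omega$ such that for every $0<\ell<n$ there is exactly one $k<\ell$ with $\pi(k,\ell)$ defined. A finite sequence $s$ is acceptable if ${\rm dom}(s)=n_i$ for some $i$ and $s\restriction[n_j,n_{j+1})\in C_j$ for all $j<i$. $S$ is the set of all $\rho=\langle\pi,s_0,\ldots,s_{n-1}\rangle$ where $n=n(\rho)\ge1$, $\pi$ is a tree mapping with domain $n$, the $s_j$ are acceptable with a common domain $n_i$ with $n_i\ge n$ (put $i(\rho)=i$),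 and $s_k+s_\ell\in T^*_{\pi(k,\ell)}$ whenever $\pi(k,\ell)$ is defined. For $\rho=\langle\pi,s_0,\ldots,s_{n-1}\rangle\in S$, $U(\rho)$ is the set of $x_0\in H$ for which there are $x_1,\ldots,x_{n-1}\in H$ with each $s_j$ an initial segment of $x_j$ and $\langle\pi,x_0\restriction n_j,\ldots,x_{n-1}\restriction n_j\rangle\in S$ for all $j>i(\rho)$. The sets $U(\rho)$, $\rho\in S$, form a basis of a topology $\tau$ on $H$. For $B\subseteq 2^\omega$ and $x\in2^\omega$, $B+x=\{b+x:b\in B\}$. *)

theory Defs
  imports "HOL-Analysis.Analysis"
begin

text \<open>Elements of 2^omega are functions nat => bool. A finite 0-1 sequence with
domain D is represented as a function nat => bool that is False outside D.\<close>

definition fs :: "nat set \<Rightarrow> (nat \<Rightarrow> bool) set" where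
  "fs D = {s. \<forall>k. k \<notin> D \<longrightarrow> \<not> s k}"

definition restr :: "(nat \<Rightarrow> bool) \<Rightarrow> nat set \<Rightarrow> (nat \<Rightarrow> bool)" where
  "restr x D = (\<lambda>k. if k \<in> D then x k else False)"

text \<open>coordinatewise addition mod 2\<close>
definition sadd :: "(nat \<Rightarrow> bool) \<Rightarrow> (nat \<Rightarrow> bool) \<Rightarrow> (nat \<Rightarrow> bool)" where
  "sadd x y = (\<lambda>k. x k \<noteq> y k)"

definition translate :: "(nat \<Rightarrow> bool) set \<Rightarrow> (nat \<Rightarrow> bool) \<Rightarrow> (nat \<Rightarrow> bool) set" where
  "translate A x = (\<lambda>a. sadd a x) ` A"

definition block :: "(nat \<Rightarrow> nat) \<Rightarrow> nat \<Rightarrow> nat set" where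
  "block ns i = {ns i ..< ns (Suc i)}"

definition cantor_top :: "(nat \<Rightarrow> bool) topology" where
  "cantor_top = product_topology (\<lambda>_. discrete_topology (UNIV :: bool set)) UNIV"

definition perfect_in :: "'a topology \<Rightarrow> 'a set \<Rightarrow> bool" where
  "perfect_in X S \<longleftrightarrow> X derived_set_of S = S"

definition Hset :: "(nat \<Rightarrow> nat) \<Rightarrow> (nat \<Rightarrow> (nat \<Rightarrow> bool) set) \<Rightarrow> (nat \<Rightarrow> bool) set" where
  "Hset ns C = {x. \<forall>i. restr x (block ns i) \<in> C i}"

definition Pstar :: "(nat \<Rightarrow> (nat \<Rightarrow> bool) set) \<Rightarrow> nat \<Rightarrow> (nat \<Rightarrow> bool) set" where
  "Pstar P m = {sadd x y | x y. x \<in> P m \<and> y \<in> P m}"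

definition in_Tstar :: "(nat \<Rightarrow> (nat \<Rightarrow> bool) set) \<Rightarrow> nat \<Rightarrow> nat \<Rightarrow> (nat \<Rightarrow> bool) \<Rightarrow> bool" where
  "in_Tstar P m d t \<longleftrightarrow> (\<exists>x \<in> Pstar P m. restr x {..<d} = t)"

definition tree_mapping :: "(nat \<times> nat \<Rightarrow> nat option) \<Rightarrow> nat \<Rightarrow> bool" where
  "tree_mapping \<pi> N \<longleftrightarrow> 1 \<le> N \<and>
     (\<forall>k l. \<pi> (k, l) \<noteq> None \<longrightarrow> k < l \<and> l < N) \<and>
     (\<forall>l. 0 < l \<and> l < N \<longrightarrow> (\<exists>!k. k < l \<and> \<pi> (k, l) \<noteq> None))"

definition acceptable :: "(nat \<Rightarrow> nat) \<Rightarrow> (nat \<Rightarrow> (nat \<Rightarrow> bool) set) \<Rightarrow> nat \<Rightarrow> (nat \<Rightarrow> bool) \<Rightarrow> bool" where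
  "acceptable ns C i s \<longleftrightarrow> s \<in> fs {..<ns i} \<and> (\<forall>j<i. restr s (block ns j) \<in> C j)"

text \<open>rho = (pi, N, i, s) stands for <pi, s 0, ..., s (N-1)> with common domain ns i;
  s j is the all-False sequence for j >= N.\<close>
type_synonym rho = "(nat \<times> nat \<Rightarrow> nat option) \<times> nat \<times> nat \<times> (nat \<Rightarrow> nat \<Rightarrow> bool)"

definition Sset :: "(nat \<Rightarrow> nat) \<Rightarrow> (nat \<Rightarrow> (nat \<Rightarrow> bool) set) \<Rightarrow> (nat \<Rightarrow> (nat \<Rightarrow> bool) set) \<Rightarrow> rho set" where
  "Sset ns C P = {(\<pi>, N, i, s). tree_mapping \<pi> N \<and> N \<le> ns i \<and>
      (\<forall>j<N. acceptable ns C i (s j)) \<and> (\<forall>j\<ge>N. s j = (\<lambda>_. False)) \<and>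
      (\<forall>k l m. \<pi> (k, l) = Some m \<longrightarrow> in_Tstar P m (ns i) (sadd (s k) (s l)))}"

definition Uset :: "(nat \<Rightarrow> nat) \<Rightarrow> (nat \<Rightarrow> (nat \<Rightarrow> bool) set) \<Rightarrow> (nat \<Rightarrow> (nat \<Rightarrow> bool) set) \<Rightarrow> rho \<Rightarrow> (nat \<Rightarrow> bool) set" where
  "Uset ns C P \<rho> = (case \<rho> of (\<pi>, N, i, s) \<Rightarrow>
     {x0 \<in> Hset ns C. \<exists>xs. xs 0 = x0 \<and>
        (\<forall>j<N. xs j \<in> Hset ns C \<and> restr (xs j) {..<ns i} = s j) \<and>
        (\<forall>j\<ge>N. xs j = (\<lambda>_. False)) \<and>
        (\<forall>j>i. (\<pi>, N, j, (\<lambda>l. restr (xs l) {..<ns j})) \<in> Sset ns C P)})"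

definition tau :: "(nat \<Rightarrow> nat) \<Rightarrow> (nat \<Rightarrow> (nat \<Rightarrow> bool) set) \<Rightarrow> (nat \<Rightarrow> (nat \<Rightarrow> bool) set) \<Rightarrow> (nat \<Rightarrow> bool) topology" where
  "tau ns C P = topology_generated_by (Uset ns C P ` Sset ns C P)"

definition nowhere_dense_in :: "'a topology \<Rightarrow> 'a set \<Rightarrow> bool" where
  "nowhere_dense_in X A \<longleftrightarrow> A \<subseteq> topspace X \<and> X interior_of (X closure_of A) = {}"

definition meager_in :: "'a topology \<Rightarrow> 'a set \<Rightarrow> bool" where
  "meager_in X A \<longleftrightarrow> (\<exists>F. countable F \<and> (\<forall>N\<in>F. nowhere_dense_in X N) \<and> A \<subseteq> \<Union>F)"

definition baire_property_in :: "'a topology \<Rightarrow> 'a set \<Rightarrow> bool" where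
  "baire_property_in X A \<longleftrightarrow> (\<exists>V. openin X V \<and> meager_in X ((A - V) \<union> (V - A)))"

end

theory Submission
  imports Defs "HOL-Combinatorics.Transposition"
begin

(*
  A basic open set of tau is coded by a finite tree whose vertices carry points of H and whose
  edges, labelled m, carry sums in the closed set P*_m.  Let V be a nonempty open set such that
  V - B is covered by nowhere dense sets F_n.  Start from a tree with an edge (0, 1) labelled m
  whose endpoints lie in V and are already separated: one side of the tree is translated by an
  element u + v of P*_m with u \<noteq> v, and the hypothesis on the C_i keeps the translated points
  in H.  Gluing further trees onto vertex 0 or vertex 1 refines this tree step by step; the limit
  tuple Y has Y 0 \<noteq> Y 1 in V and outside every F_n, hence in B, and Y 0 + Y 1 in P*_m.
  Writing Y 0 + Y 1 = x + y with x \<noteq> y in P_m, the point Y 0 + x = Y 1 + y lies in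
  (B + x) \<inter> (B + y).
*)

section \<open>Sequences, Cantor space and Baire category\<close>

lemma restr_restr: "restr (restr x A) B = restr x (A \<inter> B)"
  by (auto simp: restr_def fun_eq_iff)

lemma restr_eq_restr_iff: "restr x A = restr y A \<longleftrightarrow> (\<forall>k\<in>A. x k = y k)"
  by (auto simp: restr_def fun_eq_iff)

lemma sadd_restr: "sadd (restr x A) (restr y A) = restr (sadd x y) A"
  by (auto simp: restr_def sadd_def fun_eq_iff)

lemma sadd_commute: "sadd x y = sadd y x"
  by (auto simp: sadd_def)

lemma sadd_self: "sadd x x = (\<lambda>_. False)"
  by (simp add: sadd_def)

lemma restr_in_fs: "restr x A \<in> fs A"
  by (simp add: restr_def fs_def)

lemma in_Tstar_restr:
  assumes "in_Tstar P m d t" "d' \<le> d"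
  shows "in_Tstar P m d' (restr t {..<d'})"
proof -
  obtain x where "x \<in> Pstar P m" "restr x {..<d} = t"
    using assms(1) by (auto simp: in_Tstar_def)
  moreover have "restr t {..<d'} = restr x {..<d'}"
    using assms(2) \<open>restr x {..<d} = t\<close> by (auto simp: restr_def)
  ultimately show ?thesis
    by (auto simp: in_Tstar_def)
qed

lemma coherent_limit:
  fixes L :: "nat \<Rightarrow> nat"
  assumes "\<And>k k'. Q k \<Longrightarrow> k \<le> k' \<Longrightarrow> restr (f k') {..<L k} = restr (f k) {..<L k}"
  shows "\<exists>g. \<forall>k. Q k \<longrightarrow> restr g {..<L k} = restr (f k) {..<L k}"
proof -
  define g where "g d = f (LEAST k. Q k \<and> d < L k) d" for d
  have "g d = f k d" if "Q k" "d < L k" for k d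
  proof -
    define k0 where "k0 = (LEAST k. Q k \<and> d < L k)"
    have "Q k0" "d < L k0" "k0 \<le> k"
      using LeastI[of "\<lambda>k. Q k \<and> d < L k"] Least_le[of "\<lambda>k. Q k \<and> d < L k"] that
      by (auto simp: k0_def)
    then show ?thesis
      using assms[of k0 k] by (auto simp: g_def k0_def restr_eq_restr_iff)
  qed
  then show ?thesis by (auto simp: restr_eq_restr_iff)
qed

lemma openin_cantor_cylinder: "openin cantor_top {y. restr y {..<n} = restr x {..<n}}"
proof -
  have "y \<in> (\<Pi>\<^sub>E k\<in>UNIV. if k < n then {x k} else UNIV) \<longleftrightarrow> (\<forall>k<n. y k = x k)" for y
    by (simp add: PiE_iff)
  then have "{y. restr y {..<n} = restr x {..<n}} = (\<Pi>\<^sub>E k\<in>UNIV. if k < n then {x k} else UNIV)"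
    by (auto simp: restr_eq_restr_iff)
  moreover have "finite {k. (if k < n then {x k} else UNIV) \<noteq> UNIV}"
    by (rule finite_subset[of _ "{..<n}"]) auto
  ultimately show ?thesis
    by (simp add: cantor_top_def openin_PiE_gen)
qed

lemma perfect_in_cantor_split:
  assumes "perfect_in cantor_top S" "x \<in> S"
  shows "\<exists>y\<in>S. y \<noteq> x \<and> restr y {..<n} = restr x {..<n}"
proof -
  have "x \<in> cantor_top derived_set_of S"
    using assms by (simp add: perfect_in_def)
  then have "\<forall>T. x \<in> T \<and> openin cantor_top T \<longrightarrow> (\<exists>y. y \<noteq> x \<and> y \<in> S \<and> y \<in> T)"
    by (simp add: in_derived_set_of)
  from this[rule_format, OF conjI[OF _ openin_cantor_cylinder]] show ?thesis
    by auto
qed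

lemma closedin_cantor_prefixes:
  assumes "closedin cantor_top S" and "\<And>n. \<exists>y\<in>S. restr y {..<n} = restr x {..<n}"
  shows "x \<in> S"
proof -
  obtain y where y: "\<And>n. y n \<in> S" "\<And>n. restr (y n) {..<n} = restr x {..<n}"
    using assms(2) by metis
  have ev: "eventually (\<lambda>n. y n k = x k) sequentially" for k
    using eventually_gt_at_top[of k]
  proof eventually_elim
    case (elim n)
    then show ?case
      using y(2)[of n] by (simp add: restr_eq_restr_iff)
  qed
  have "limitin (discrete_topology UNIV) (\<lambda>n. y n k) (x k) sequentially" for k
    unfolding limitin_def using ev[of k] by (auto elim: eventually_mono)
  then have "limitin cantor_top y x sequentially"
    unfolding cantor_top_def limitin_componentwise by simp
  then show ?thesis
    by (rule limitin_closedin) (use assms(1) y(1) in auto)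
qed

lemma closedin_cantor_Pstar:
  assumes "perfect_in cantor_top (P m)"
  shows "closedin cantor_top (Pstar P m)"
proof -
  have "compact_space cantor_top"
    by (simp add: cantor_top_def compact_space_product_topology compact_space_discrete_topology)
  moreover have "closedin cantor_top (P m)"
    using assms by (simp add: closedin_contains_derived_set perfect_in_def cantor_top_def)
  ultimately have "compactin (prod_topology cantor_top cantor_top) (P m \<times> P m)"
    by (simp add: closedin_compact_space compactin_Times)
  moreover have "continuous_map (prod_topology cantor_top cantor_top) cantor_top (\<lambda>(x, y). sadd x y)"
    unfolding cantor_top_def continuous_map_componentwise_UNIV
  proof
    fix k
    let ?X = "product_topology (\<lambda>_. discrete_topology (UNIV :: bool set)) (UNIV :: nat set)"
    have "continuous_map (prod_topology ?X ?X) (discrete_topology (UNIV \<times> UNIV)) (\<lambda>(x, y). (x k, y k))"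
      unfolding prod_topology_discrete_topology
      by (auto simp: case_prod_unfold intro!: continuous_intros)
    from continuous_map_compose[OF this, of "discrete_topology UNIV" "\<lambda>(a, b). a \<noteq> b"]
    show "continuous_map (prod_topology ?X ?X) (discrete_topology UNIV) (\<lambda>z. (case z of (x, y) \<Rightarrow> sadd x y) k)"
      by (simp add: sadd_def case_prod_unfold o_def)
  qed
  moreover have "Pstar P m = (\<lambda>(x, y). sadd x y) ` (P m \<times> P m)"
    by (auto simp: Pstar_def)
  ultimately show ?thesis
    by (metis Hausdorff_space_discrete_topology Hausdorff_space_product_topology cantor_top_def
        compactin_imp_closedin image_compactin)
qed

lemma Pstar_if_in_Tstar:
  assumes "perfect_in cantor_top (P m)" and "\<And>d. in_Tstar P m d (restr x {..<d})"
  shows "x \<in> Pstar P m"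
  using closedin_cantor_Pstar[of P m, OF assms(1)] assms(2) unfolding in_Tstar_def
  by (rule closedin_cantor_prefixes)

lemma translates_meet_if_sadd_in_Pstar:
  assumes "y \<in> B" "z \<in> B" "y \<noteq> z" "sadd y z \<in> Pstar P m"
  shows "\<exists>u\<in>P m. \<exists>v\<in>P m. u \<noteq> v \<and> translate B u \<inter> translate B v \<noteq> {}"
proof -
  obtain u v where uv: "u \<in> P m" "v \<in> P m" "sadd y z = sadd u v"
    using assms(4) by (auto simp: Pstar_def)
  have "u \<noteq> v"
  proof
    assume "u = v"
    then have "y k = z k" for k
      using fun_cong[OF uv(3), of k] by (simp add: sadd_def)
    then show False
      using assms(3) by blast
  qed
  moreover have "sadd y u = sadd z v"
  proof
    fix k
    show "sadd y u k = sadd z v k"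
      using fun_cong[OF uv(3), of k] by (auto simp: sadd_def)
  qed
  then have "sadd y u \<in> translate B u \<inter> translate B v"
    using assms(1,2) unfolding translate_def by (metis IntI image_eqI)
  ultimately show ?thesis
    using uv by blast
qed

lemma nonmeager_Baire_property_comeager_in_open:
  assumes "\<not> meager_in X B" and "baire_property_in X B"
  obtains V and F :: "nat \<Rightarrow> 'a set"
  where "openin X V" "V \<noteq> {}" "\<forall>n. nowhere_dense_in X (F n)" "V - (\<Union>n. F n) \<subseteq> B"
proof -
  obtain V where V: "openin X V" "meager_in X ((B - V) \<union> (V - B))"
    using assms(2) by (auto simp: baire_property_in_def)
  then obtain M where M: "countable M" "\<forall>N\<in>M. nowhere_dense_in X N" "(B - V) \<union> (V - B) \<subseteq> \<Union>M"
    by (auto simp: meager_in_def)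
  define F where "F = from_nat_into (insert {} M)"
  have F: "range F = insert {} M"
    using M(1) by (simp add: F_def)
  have nd: "nowhere_dense_in X (F n)" for n
  proof -
    have "F n \<in> insert {} M"
      using F by blast
    then show ?thesis
      using M(2) by (auto simp: nowhere_dense_in_def)
  qed
  have ne: "V \<noteq> {}"
  proof
    assume "V = {}"
    then have "B \<subseteq> \<Union>M"
      using M(3) by simp
    then have "meager_in X B"
      unfolding meager_in_def using M(1,2) by (intro exI[of _ M]) simp
    then show False
      using assms(1) by simp
  qed
  have "V - (\<Union>n. F n) \<subseteq> B"
    using M(3) F by auto
  then show ?thesis
    using nd by (intro that[of V F, OF V(1) ne]) auto
qed

section \<open>Tree mappings\<close>

lemma tree_mapping_edge: "tree_mapping \<pi> N \<Longrightarrow> \<pi> (k, l) \<noteq> None \<Longrightarrow> k < l \<and> l < N"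
  by (simp add: tree_mapping_def)

lemma tree_mappingI:
  assumes "0 < N" and "\<And>k l. \<pi> (k, l) \<noteq> None \<Longrightarrow> k < l \<and> l < N"
    and "\<And>l. 0 < l \<Longrightarrow> l < N \<Longrightarrow> \<exists>k. \<pi> (k, l) \<noteq> None"
    and "\<And>k k' l. \<pi> (k, l) \<noteq> None \<Longrightarrow> \<pi> (k', l) \<noteq> None \<Longrightarrow> k = k'"
  shows "tree_mapping \<pi> N"
proof -
  have "\<exists>!k. k < l \<and> \<pi> (k, l) \<noteq> None" if "0 < l" "l < N" for l
  proof (rule ex_ex1I)
    show "\<exists>k. k < l \<and> \<pi> (k, l) \<noteq> None"
      using assms(2)[of _ l] assms(3)[of l] that by blast
    show "k = k'" if "k < l \<and> \<pi> (k, l) \<noteq> None" "k' < l \<and> \<pi> (k', l) \<noteq> None" for k k'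
      using assms(4) that by blast
  qed
  then show ?thesis
    using assms(1,2) by (simp add: tree_mapping_def)
qed

lemma tree_mapping_pos: "tree_mapping \<pi> N \<Longrightarrow> 0 < N"
  by (simp add: tree_mapping_def)

lemma tree_mapping_parent:
  "tree_mapping \<pi> N \<Longrightarrow> 0 < l \<Longrightarrow> l < N \<Longrightarrow> \<exists>k. \<pi> (k, l) \<noteq> None"
  unfolding tree_mapping_def by blast

lemma tree_mapping_parent_unique:
  assumes "tree_mapping \<pi> N" "\<pi> (k, l) \<noteq> None" "\<pi> (k', l) \<noteq> None"
  shows "k = k'"
proof -
  have "k < l" "k' < l" "l < N"
    using assms tree_mapping_edge by blast+
  then have "\<exists>!k. k < l \<and> \<pi> (k, l) \<noteq> None"
    using assms(1) by (simp add: tree_mapping_def)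
  then show ?thesis
    using \<open>k < l\<close> \<open>k' < l\<close> assms(2,3) by blast
qed

definition glue_index :: "nat \<Rightarrow> nat \<Rightarrow> nat \<Rightarrow> nat" where
  "glue_index r N j = (if j = 0 then r else j + N - 1)"

text \<open>The root of the second tree is identified with vertex \<open>r\<close> of the first, and its vertex
  \<open>j > 0\<close> becomes \<open>j + N - 1\<close>.\<close>

definition glue :: "nat \<Rightarrow> (nat \<times> nat \<Rightarrow> nat option) \<Rightarrow> nat \<Rightarrow> (nat \<times> nat \<Rightarrow> nat option) \<Rightarrow> nat
    \<Rightarrow> nat \<times> nat \<Rightarrow> nat option" where
  "glue r \<pi> N \<pi>' N' = (\<lambda>(k, l).
     if l < N then \<pi> (k, l)
     else if N + N' - 1 \<le> l then None
     else if k = r then \<pi>' (0, l + 1 - N)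
     else if N \<le> k then \<pi>' (k + 1 - N, l + 1 - N)
     else None)"

definition glue_tuple :: "nat \<Rightarrow> (nat \<Rightarrow> 'a) \<Rightarrow> (nat \<Rightarrow> 'a) \<Rightarrow> nat \<Rightarrow> 'a" where
  "glue_tuple N xs ys j = (if j < N then xs j else ys (j + 1 - N))"

lemma glue_index_inject: "r < N \<Longrightarrow> glue_index r N j = glue_index r N j' \<longleftrightarrow> j = j'"
  by (auto simp: glue_index_def)

lemma glue_index_less: "r < N \<Longrightarrow> j < N' \<Longrightarrow> glue_index r N j < N + N' - 1"
  by (auto simp: glue_index_def)

lemma glue_below [simp]: "l < N \<Longrightarrow> glue r \<pi> N \<pi>' N' (k, l) = \<pi> (k, l)"
  by (simp add: glue_def)

lemma glue_glue_index:
  assumes "r < N" "0 < l" "l < N'"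
  shows "glue r \<pi> N \<pi>' N' (glue_index r N k, glue_index r N l) = \<pi>' (k, l)"
  using assms by (auto simp: glue_def glue_index_def)

lemma glue_SomeE:
  assumes "glue r \<pi> N \<pi>' N' (k, l) = Some m"
  obtains "l < N" "\<pi> (k, l) = Some m"
  | k' l' where "N \<le> l" "k = glue_index r N k'" "l = glue_index r N l'" "0 < l'" "\<pi>' (k', l') = Some m"
proof (cases "l < N")
  case True
  with assms that(1) show ?thesis
    by simp
next
  case False
  then have l: "N \<le> l" "l = glue_index r N (l + 1 - N)" "0 < l + 1 - N"
    by (auto simp: glue_index_def)
  show ?thesis
  proof (cases "k = r")
    case True
    with assms False l show ?thesis
      by (intro that(2)[of 0 "l + 1 - N"]) (auto simp: glue_def glue_index_def split: if_splits)
  next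
    case False
    with assms \<open>\<not> l < N\<close> l show ?thesis
      by (intro that(2)[of "k + 1 - N" "l + 1 - N"]) (auto simp: glue_def glue_index_def split: if_splits)
  qed
qed

lemma glue_edge_beyond:
  assumes "glue r \<pi> N \<pi>' N' (k, l) \<noteq> None" "N \<le> l"
  obtains k' l' where "k = glue_index r N k'" "l = glue_index r N l'" "\<pi>' (k', l') \<noteq> None"
proof -
  obtain m where "glue r \<pi> N \<pi>' N' (k, l) = Some m"
    using assms(1) by blast
  then show ?thesis
  proof (rule glue_SomeE)
    fix k' l'
    assume "k = glue_index r N k'" "l = glue_index r N l'" "\<pi>' (k', l') = Some m"
    then show ?thesis
      using that[of k' l'] by simp
  qed (use assms(2) in simp)
qed

lemma glue_tuple_glue_index:
  "r < N \<Longrightarrow> xs r = ys 0 \<Longrightarrow> glue_tuple N xs ys (glue_index r N j) = ys j"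
  by (auto simp: glue_tuple_def glue_index_def)

lemma glue_edge_less:
  assumes "tree_mapping \<pi> N" "tree_mapping \<pi>' N'" "r < N" "glue r \<pi> N \<pi>' N' (k, l) = Some m"
  shows "k < l \<and> l < N + N' - 1"
  using assms(4)
proof (rule glue_SomeE)
  assume "l < N" "\<pi> (k, l) = Some m"
  then show ?thesis
    using tree_mapping_edge[OF assms(1), of k l] tree_mapping_pos[OF assms(2)] by auto
next
  fix k' l'
  assume "k = glue_index r N k'" "l = glue_index r N l'" "0 < l'" "\<pi>' (k', l') = Some m"
  moreover have "k' < l'" "l' < N'"
    using tree_mapping_edge[OF assms(2), of k' l'] \<open>\<pi>' (k', l') = Some m\<close> by simp_all
  ultimately show ?thesis
    using assms(3) by (auto simp: glue_index_def)
qed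

lemma tree_mapping_glue:
  assumes "tree_mapping \<pi> N" "tree_mapping \<pi>' N'" "r < N"
  shows "tree_mapping (glue r \<pi> N \<pi>' N') (N + N' - 1)"
proof (rule tree_mappingI)
  show "0 < N + N' - 1"
    using assms(3) tree_mapping_pos[OF assms(2)] by simp
  show "k < l \<and> l < N + N' - 1" if "glue r \<pi> N \<pi>' N' (k, l) \<noteq> None" for k l
    using that glue_edge_less[OF assms] by blast
  show "\<exists>k. glue r \<pi> N \<pi>' N' (k, l) \<noteq> None" if "0 < l" "l < N + N' - 1" for l
  proof (cases "l < N")
    case True
    then show ?thesis
      using tree_mapping_parent[OF assms(1) \<open>0 < l\<close>] by simp
  next
    case False
    then have l: "0 < l + 1 - N" "l + 1 - N < N'" "glue_index r N (l + 1 - N) = l"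
      using that by (auto simp: glue_index_def)
    then obtain k' where "\<pi>' (k', l + 1 - N) \<noteq> None"
      using tree_mapping_parent[OF assms(2)] by blast
    then have "glue r \<pi> N \<pi>' N' (glue_index r N k', l) \<noteq> None"
      using glue_glue_index[OF assms(3) l(1,2), of \<pi> \<pi>' k'] l(3) by simp
    then show ?thesis
      by blast
  qed
  show "k = k'" if edges: "glue r \<pi> N \<pi>' N' (k, l) \<noteq> None" "glue r \<pi> N \<pi>' N' (k', l) \<noteq> None"
    for k k' l
  proof (cases "l < N")
    case True
    then show ?thesis
      using edges tree_mapping_parent_unique[OF assms(1)] by simp
  next
    case False
    obtain k1 l1 where 1: "k = glue_index r N k1" "l = glue_index r N l1" "\<pi>' (k1, l1) \<noteq> None"
      using glue_edge_beyond[OF edges(1)] False by auto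
    obtain k2 l2 where 2: "k' = glue_index r N k2" "l = glue_index r N l2" "\<pi>' (k2, l2) \<noteq> None"
      using glue_edge_beyond[OF edges(2)] False by auto
    have "l1 = l2"
      using 1(2) 2(2) glue_index_inject[OF assms(3)] by simp
    then have "k1 = k2"
      using 1(3) 2(3) tree_mapping_parent_unique[OF assms(2)] by simp
    then show ?thesis
      using 1(1) 2(1) by simp
  qed
qed

abbreviation flip01 :: "nat \<Rightarrow> nat" where
  "flip01 \<equiv> Transposition.transpose 0 1"

text \<open>Vertices 0 and 1 change places; the edge between them keeps the orientation \<open>(0, 1)\<close>.\<close>

definition swap_root :: "(nat \<times> nat \<Rightarrow> nat option) \<Rightarrow> nat \<times> nat \<Rightarrow> nat option" where
  "swap_root \<pi> = (\<lambda>(k, l). if {k, l} = {0, 1} then \<pi> (k, l) else \<pi> (flip01 k, flip01 l))"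

lemma flip01_pair: "{k, l} = {0, 1} \<Longrightarrow> flip01 k = l \<and> flip01 l = k"
  by (auto simp: doubleton_eq_iff)

lemma flip01_pair_iff: "{flip01 k, flip01 l} = {0, 1} \<longleftrightarrow> {k, l} = {0, 1}"
  by (auto simp: doubleton_eq_iff transpose_eq_iff)

lemma flip01_less_iff: "{k, l} \<noteq> {0, 1} \<Longrightarrow> flip01 k < flip01 l \<longleftrightarrow> k < l"
  by (auto simp: doubleton_eq_iff Transposition.transpose_def)

lemma flip01_less: "2 \<le> N \<Longrightarrow> flip01 j < N \<longleftrightarrow> j < N"
  by (auto simp: Transposition.transpose_def)

lemma swap_root_swap_root [simp]: "swap_root (swap_root \<pi>) = \<pi>"
proof
  fix kl :: "nat \<times> nat"
  obtain k l where "kl = (k, l)"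
    by (cases kl)
  then show "swap_root (swap_root \<pi>) kl = \<pi> kl"
    using flip01_pair_iff[of k l] by (simp add: swap_root_def)
qed

lemma swap_root_01: "swap_root \<pi> (0, 1) = \<pi> (0, 1)"
  by (simp add: swap_root_def)

lemma swap_root_apply:
  "{k, l} \<noteq> {0, 1} \<Longrightarrow> swap_root \<pi> (k, l) = \<pi> (flip01 k, flip01 l)"
  by (simp add: swap_root_def)

lemma swap_root_apply_ge2:
  "2 \<le> l \<Longrightarrow> swap_root \<pi> (k, l) = \<pi> (flip01 k, l)"
  by (auto simp: swap_root_def doubleton_eq_iff)

lemma swap_root_edge_less:
  assumes "tree_mapping \<pi> N" "\<pi> (0, 1) \<noteq> None" "swap_root \<pi> (k, l) \<noteq> None"
  shows "k < l \<and> l < N"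
proof (cases "{k, l} = {0, 1}")
  case True
  then have "swap_root \<pi> (k, l) = \<pi> (k, l)"
    by (simp add: swap_root_def)
  then show ?thesis
    using assms(3) tree_mapping_edge[OF assms(1), of k l] by simp
next
  case False
  have N: "2 \<le> N"
    using tree_mapping_edge[OF assms(1,2)] by simp
  from False have "flip01 k < flip01 l \<and> flip01 l < N"
    using assms(3) tree_mapping_edge[OF assms(1), of "flip01 k" "flip01 l"] by (simp add: swap_root_apply)
  then show ?thesis
    using flip01_less_iff[OF False] flip01_less[OF N, of l] by simp
qed

lemma tree_mapping_swap_root:
  assumes "tree_mapping \<pi> N" "\<pi> (0, 1) \<noteq> None"
  shows "tree_mapping (swap_root \<pi>) N"
proof (rule tree_mappingI)
  show "0 < N"
    using tree_mapping_pos[OF assms(1)] .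
  show "k < l \<and> l < N" if "swap_root \<pi> (k, l) \<noteq> None" for k l
    using swap_root_edge_less[OF assms that] .
  show "\<exists>k. swap_root \<pi> (k, l) \<noteq> None" if l: "0 < l" "l < N" for l
  proof (cases "l = 1")
    case True
    have "swap_root \<pi> (0, 1) \<noteq> None"
      using assms(2) by (simp only: swap_root_01 not_False_eq_True)
    with True show ?thesis
      by blast
  next
    case False
    then have "2 \<le> l"
      using l(1) by simp
    obtain k where "\<pi> (k, l) \<noteq> None"
      using tree_mapping_parent[OF assms(1) l] by blast
    then have "swap_root \<pi> (flip01 k, l) \<noteq> None"
      using swap_root_apply_ge2[OF \<open>2 \<le> l\<close>] by simp
    then show ?thesis
      by blast
  qed
  show "k = k'" if edges: "swap_root \<pi> (k, l) \<noteq> None" "swap_root \<pi> (k', l) \<noteq> None" for k k' l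
  proof (cases "2 \<le> l")
    case True
    have "\<pi> (flip01 k, l) \<noteq> None" "\<pi> (flip01 k', l) \<noteq> None"
      using edges swap_root_apply_ge2[OF True, of \<pi>] by simp_all
    then have "flip01 k = flip01 k'"
      by (rule tree_mapping_parent_unique[OF assms(1)])
    then show ?thesis
      by (rule transpose_eq_imp_eq)
  next
    case False
    with swap_root_edge_less[OF assms edges(1)] swap_root_edge_less[OF assms edges(2)] show ?thesis
      by linarith
  qed
qed

definition single_edge :: "nat \<Rightarrow> nat \<times> nat \<Rightarrow> nat option" where
  "single_edge m = (\<lambda>kl. if kl = (0, 1) then Some m else None)"

text \<open>Vertices 0 and 1, joined by an edge labelled \<open>m\<close>, each the root of a copy of \<open>\<pi>\<close>.\<close>

definition twin_tree :: "nat \<Rightarrow> (nat \<times> nat \<Rightarrow> nat option) \<Rightarrow> nat \<Rightarrow> nat \<times> nat \<Rightarrow> nat option" where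
  "twin_tree m \<pi> N = glue 1 (glue 0 (single_edge m) 2 \<pi> N) (N + 1) \<pi> N"

definition twin_tuple :: "nat \<Rightarrow> (nat \<Rightarrow> 'a) \<Rightarrow> nat \<Rightarrow> 'a" where
  "twin_tuple N zs = glue_tuple (N + 1) (glue_tuple 2 (\<lambda>_. zs 0) zs) zs"

lemma tree_mapping_single_edge: "tree_mapping (single_edge m) 2"
  by (rule tree_mappingI) (auto simp: single_edge_def split: if_splits)

lemma twin_tree_01: "0 < N \<Longrightarrow> twin_tree m \<pi> N (0, 1) = Some m"
  by (simp add: twin_tree_def single_edge_def)

lemma twin_tree_cut:
  assumes "twin_tree m \<pi> N (k, l) = Some m'" "(k, l) \<noteq> (0, 1)" "tree_mapping \<pi> N"
  shows "k \<in> insert 1 {N + 1..} \<longleftrightarrow> l \<in> insert 1 {N + 1..}"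
  using assms(1)[unfolded twin_tree_def]
proof (rule glue_SomeE)
  assume "l < N + 1" "glue 0 (single_edge m) 2 \<pi> N (k, l) = Some m'"
  from this(2) show ?thesis
  proof (rule glue_SomeE)
    assume "l < 2" "single_edge m (k, l) = Some m'"
    with assms(2) show ?thesis
      by (simp add: single_edge_def split: if_splits)
  next
    fix k' l'
    assume edge: "2 \<le> l" "k = glue_index 0 2 k'" "l = glue_index 0 2 l'" "\<pi> (k', l') = Some m'"
    moreover have "k' < l'"
      using tree_mapping_edge[OF assms(3), of k' l'] edge(4) by simp
    ultimately show ?thesis
      using \<open>l < N + 1\<close> by (auto simp: glue_index_def split: if_splits)
  qed
next
  fix k' l'
  assume "N + 1 \<le> l" "k = glue_index 1 (N + 1) k'"
  then show ?thesis
    by (auto simp: glue_index_def)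
qed

section \<open>Basic open sets of tau\<close>

text \<open>A configuration \<open>(\<pi>, N, i, xs)\<close> carries whole points \<open>xs j\<close> where \<open>rho\<close> carries their
  prefixes of length \<open>ns i\<close>; the basic open set it codes is the set of roots of its extensions
  (see \<open>Uset_rho_of\<close>).\<close>

type_synonym config = rho

locale tree_topology =
  fixes ns :: "nat \<Rightarrow> nat" and C :: "nat \<Rightarrow> (nat \<Rightarrow> bool) set"
    and P :: "nat \<Rightarrow> (nat \<Rightarrow> bool) set"
  assumes strict_mono_ns: "strict_mono ns"
begin

lemma ns_mono: "i \<le> j \<Longrightarrow> ns i \<le> ns j"
  using strict_mono_ns by (simp add: strict_mono_less_eq)

lemma le_ns: "i \<le> ns i"
  using strict_mono_ns by (rule strict_mono_imp_increasing)

lemma block_subset_lessThan: "j < i \<Longrightarrow> block ns j \<subseteq> {..<ns i}"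
  using ns_mono[of "Suc j" i] by (auto simp: block_def)

lemma block_unique: "d \<in> block ns b \<Longrightarrow> d \<in> block ns b' \<Longrightarrow> b = b'"
  using ns_mono[of "Suc b" b'] ns_mono[of "Suc b'" b]
  by (cases b b' rule: linorder_cases) (auto simp: block_def)

lemma acceptable_restr:
  assumes "x \<in> Hset ns C"
  shows "acceptable ns C i (restr x {..<ns i})"
proof -
  have "restr (restr x {..<ns i}) (block ns j) = restr x (block ns j)" if "j < i" for j
    using block_subset_lessThan[OF that] by (simp add: restr_restr Int_absorb1)
  then show ?thesis
    using assms by (simp add: acceptable_def Hset_def restr_in_fs)
qed

lemma Hset_if_prefixes:
  assumes "\<And>d. \<exists>z\<in>Hset ns C. restr z {..<d} = restr y {..<d}"
  shows "y \<in> Hset ns C"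
  unfolding Hset_def
proof (intro CollectI allI)
  fix b
  obtain z where z: "z \<in> Hset ns C" "restr z {..<ns (Suc b)} = restr y {..<ns (Suc b)}"
    using assms by blast
  then have "restr z (block ns b) = restr y (block ns b)"
    by (auto simp: restr_eq_restr_iff block_def)
  moreover have "restr z (block ns b) \<in> C b"
    using z(1) by (simp add: Hset_def)
  ultimately show "restr y (block ns b) \<in> C b"
    by simp
qed

definition admissible :: "(nat \<times> nat \<Rightarrow> nat option) \<Rightarrow> nat \<Rightarrow> (nat \<Rightarrow> nat \<Rightarrow> bool) \<Rightarrow> bool" where
  "admissible \<pi> N xs \<longleftrightarrow> tree_mapping \<pi> N \<and> (\<forall>j<N. xs j \<in> Hset ns C) \<and>
     (\<forall>k l m d. \<pi> (k, l) = Some m \<longrightarrow> in_Tstar P m d (restr (sadd (xs k) (xs l)) {..<d}))"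

lemma admissible_if_prefixes:
  assumes "tree_mapping \<pi> N"
    and "\<And>d. \<exists>zs. admissible \<pi> N zs \<and> (\<forall>j<N. restr (zs j) {..<d} = restr (xs j) {..<d})"
  shows "admissible \<pi> N xs"
proof -
  have "xs j \<in> Hset ns C" if "j < N" for j
  proof (rule Hset_if_prefixes)
    fix d
    obtain zs where "admissible \<pi> N zs" "\<forall>j<N. restr (zs j) {..<d} = restr (xs j) {..<d}"
      using assms(2) by blast
    with that show "\<exists>z\<in>Hset ns C. restr z {..<d} = restr (xs j) {..<d}"
      by (auto simp: admissible_def)
  qed
  moreover have "in_Tstar P m d (restr (sadd (xs k) (xs l)) {..<d})" if "\<pi> (k, l) = Some m" for k l m d
  proof -
    obtain zs where zs: "admissible \<pi> N zs" "\<forall>j<N. restr (zs j) {..<d} = restr (xs j) {..<d}"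
      using assms(2) by blast
    have "k < N" "l < N"
      using tree_mapping_edge[OF assms(1), of k l] that by auto
    then have "restr (sadd (zs k) (zs l)) {..<d} = restr (sadd (xs k) (xs l)) {..<d}"
      using zs(2) by (simp flip: sadd_restr)
    with zs(1) that show ?thesis
      by (metis admissible_def)
  qed
  ultimately show ?thesis
    using assms(1) by (simp add: admissible_def)
qed

fun extensions :: "config \<Rightarrow> (nat \<Rightarrow> nat \<Rightarrow> bool) set" where
  "extensions (\<pi>, N, i, xs) =
     {ts. admissible \<pi> N ts \<and> (\<forall>j<N. restr (ts j) {..<ns i} = restr (xs j) {..<ns i})}"

lemma extensions_mono:
  assumes "ys \<in> extensions (\<pi>, N, i, xs)" "i \<le> i'"
  shows "extensions (\<pi>, N, i', ys) \<subseteq> extensions (\<pi>, N, i, xs)"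
  using assms(1) ns_mono[OF assms(2)] by (auto simp: restr_eq_restr_iff)

fun rho_of :: "config \<Rightarrow> rho" where
  "rho_of (\<pi>, N, i, xs) = (\<pi>, N, i, \<lambda>j. if j < N then restr (xs j) {..<ns i} else (\<lambda>_. False))"

lemma rho_of_in_Sset:
  assumes "admissible \<pi> N xs" "N \<le> ns i"
  shows "rho_of (\<pi>, N, i, xs) \<in> Sset ns C P"
proof -
  have "in_Tstar P m (ns i) (sadd (restr (xs k) {..<ns i}) (restr (xs l) {..<ns i}))"
    if "\<pi> (k, l) = Some m" for k l m
    using assms(1) that by (simp add: admissible_def sadd_restr)
  moreover have "k < N \<and> l < N" if "\<pi> (k, l) = Some m" for k l m
    using assms(1) that by (auto simp: admissible_def dest: tree_mapping_edge)
  ultimately show ?thesis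
    using assms acceptable_restr by (auto simp: Sset_def admissible_def)
qed

lemma admissible_if_Sset_prefixes:
  assumes "tree_mapping \<pi> N" "\<forall>j<N. xs j \<in> Hset ns C"
    and "\<forall>j>i. (\<pi>, N, j, \<lambda>l. restr (xs l) {..<ns j}) \<in> Sset ns C P"
  shows "admissible \<pi> N xs"
proof -
  have "in_Tstar P m d (restr (sadd (xs k) (xs l)) {..<d})" if "\<pi> (k, l) = Some m" for k l m d
  proof -
    define j where "j = Suc (i + d)"
    have "i < j" "d \<le> ns j"
      using le_ns[of j] by (auto simp: j_def)
    then have "in_Tstar P m (ns j) (restr (sadd (xs k) (xs l)) {..<ns j})"
      using assms(3) that by (auto simp: Sset_def sadd_restr)
    from in_Tstar_restr[OF this \<open>d \<le> ns j\<close>] show ?thesis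
      using \<open>d \<le> ns j\<close> by (simp add: restr_restr Int_absorb1)
  qed
  with assms(1,2) show ?thesis
    by (simp add: admissible_def)
qed

lemma Uset_rho_of:
  assumes "admissible \<pi> N xs" "N \<le> ns i"
  shows "Uset ns C P (rho_of (\<pi>, N, i, xs)) = (\<lambda>ts. ts 0) ` extensions (\<pi>, N, i, xs)"
proof (intro equalityI subsetI)
  fix x
  assume "x \<in> Uset ns C P (rho_of (\<pi>, N, i, xs))"
  then obtain ys where ys: "ys 0 = x" "\<forall>j<N. ys j \<in> Hset ns C"
    "\<forall>j<N. restr (ys j) {..<ns i} = restr (xs j) {..<ns i}"
    "\<forall>j>i. (\<pi>, N, j, \<lambda>l. restr (ys l) {..<ns j}) \<in> Sset ns C P"
    by (auto simp: Uset_def)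
  then have "ys \<in> extensions (\<pi>, N, i, xs)"
    using assms(1) admissible_if_Sset_prefixes by (auto simp: admissible_def)
  with ys(1) show "x \<in> (\<lambda>ts. ts 0) ` extensions (\<pi>, N, i, xs)"
    by blast
next
  fix x
  assume "x \<in> (\<lambda>ts. ts 0) ` extensions (\<pi>, N, i, xs)"
  then obtain ts where ts: "ts \<in> extensions (\<pi>, N, i, xs)" "x = ts 0"
    by blast
  define ys where "ys j = (if j < N then ts j else (\<lambda>_. False))" for j
  have N: "0 < N"
    using assms(1) by (simp add: admissible_def tree_mapping_def)
  have "(\<pi>, N, j, \<lambda>l. restr (ys l) {..<ns j}) \<in> Sset ns C P" if "i < j" for j
  proof -
    have "rho_of (\<pi>, N, j, ts) \<in> Sset ns C P"
      using ts(1) assms(2) ns_mono[of i j] that by (intro rho_of_in_Sset) auto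
    moreover have "rho_of (\<pi>, N, j, ts) = (\<pi>, N, j, \<lambda>l. restr (ys l) {..<ns j})"
      by (auto simp: ys_def restr_def fun_eq_iff)
    ultimately show ?thesis
      by simp
  qed
  then show "x \<in> Uset ns C P (rho_of (\<pi>, N, i, xs))"
    using ts N unfolding Uset_def by (auto simp: ys_def admissible_def intro!: exI[of _ ys])
qed

lemma Uset_eq_root_extensions:
  assumes "\<rho> \<in> Sset ns C P" "y \<in> Uset ns C P \<rho>"
  shows "\<exists>\<pi> N i ys. ys 0 = y \<and> admissible \<pi> N ys \<and> N \<le> ns i \<and>
    Uset ns C P \<rho> = (\<lambda>ts. ts 0) ` extensions (\<pi>, N, i, ys)"
proof -
  obtain \<pi> N i s where \<rho>: "\<rho> = (\<pi>, N, i, s)"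
    by (cases \<rho>)
  obtain ys where ys: "ys 0 = y" "\<forall>j<N. ys j \<in> Hset ns C \<and> restr (ys j) {..<ns i} = s j"
    "\<forall>j>i. (\<pi>, N, j, \<lambda>l. restr (ys l) {..<ns j}) \<in> Sset ns C P"
    using assms(2) by (auto simp: Uset_def \<rho>)
  have S: "tree_mapping \<pi> N" "N \<le> ns i" "\<forall>j\<ge>N. s j = (\<lambda>_. False)"
    using assms(1) by (auto simp: Sset_def \<rho>)
  have "admissible \<pi> N ys"
    using admissible_if_Sset_prefixes[of \<pi> N ys i] S(1) ys(2,3) by blast
  moreover have "\<rho> = rho_of (\<pi>, N, i, ys)"
    using ys(2) S(3) by (auto simp: \<rho> fun_eq_iff)
  ultimately have "Uset ns C P \<rho> = (\<lambda>ts. ts 0) ` extensions (\<pi>, N, i, ys)"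
    using Uset_rho_of S(2) by simp
  with ys(1) S(2) \<open>admissible \<pi> N ys\<close> show ?thesis
    by blast
qed

lemma openin_extensions_root:
  assumes "admissible \<pi> N xs" "N \<le> ns i"
  shows "openin (tau ns C P) ((\<lambda>ts. ts 0) ` extensions (\<pi>, N, i, xs))"
  unfolding tau_def Uset_rho_of[OF assms, symmetric]
  using rho_of_in_Sset[OF assms] by (intro topology_generated_by_Basis) simp

lemma admissible_glue:
  assumes "admissible \<pi> N xs" "admissible \<pi>' N' ys" "r < N" "xs r = ys 0"
  shows "admissible (glue r \<pi> N \<pi>' N') (N + N' - 1) (glue_tuple N xs ys)"
proof -
  have tree: "tree_mapping \<pi> N" "tree_mapping \<pi>' N'"
    using assms(1,2) by (simp_all add: admissible_def)
  have "glue_tuple N xs ys j \<in> Hset ns C" if "j < N + N' - 1" for j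
    using that assms(1,2) by (auto simp: glue_tuple_def admissible_def)
  moreover have "in_Tstar P m d (restr (sadd (glue_tuple N xs ys k) (glue_tuple N xs ys l)) {..<d})"
    if "glue r \<pi> N \<pi>' N' (k, l) = Some m" for k l m d
    using that
  proof (rule glue_SomeE)
    assume "l < N" "\<pi> (k, l) = Some m"
    moreover have "k < N"
      using tree_mapping_edge[OF tree(1), of k l] calculation by simp
    ultimately show ?thesis
      using assms(1) by (simp add: glue_tuple_def admissible_def)
  next
    fix k' l'
    assume "k = glue_index r N k'" "l = glue_index r N l'" "\<pi>' (k', l') = Some m"
    then show ?thesis
      using assms(2-4) by (simp add: glue_tuple_glue_index admissible_def)
  qed
  ultimately show ?thesis
    using tree_mapping_glue[OF tree assms(3)] by (simp add: admissible_def)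
qed

lemma admissible_glue_left:
  assumes "admissible (glue r \<pi> N \<pi>' N') (N + N' - 1) ts" "tree_mapping \<pi> N" "tree_mapping \<pi>' N'"
  shows "admissible \<pi> N ts"
proof -
  have "0 < N'"
    using assms(3) by (rule tree_mapping_pos)
  then have "ts j \<in> Hset ns C" if "j < N" for j
    using assms(1) that by (simp add: admissible_def)
  moreover have "in_Tstar P m d (restr (sadd (ts k) (ts l)) {..<d})" if "\<pi> (k, l) = Some m" for k l m d
  proof -
    have "glue r \<pi> N \<pi>' N' (k, l) = Some m"
      using tree_mapping_edge[OF assms(2), of k l] that by simp
    then show ?thesis
      using assms(1) by (simp add: admissible_def)
  qed
  ultimately show ?thesis
    using assms(2) by (simp add: admissible_def)
qed

lemma admissible_glue_right:
  assumes "admissible (glue r \<pi> N \<pi>' N') (N + N' - 1) ts" "tree_mapping \<pi>' N'" "r < N"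
  shows "admissible \<pi>' N' (ts \<circ> glue_index r N)"
proof -
  have "ts (glue_index r N j) \<in> Hset ns C" if "j < N'" for j
    using assms(1) glue_index_less[OF assms(3) that] by (simp add: admissible_def)
  moreover have "in_Tstar P m d (restr (sadd (ts (glue_index r N k)) (ts (glue_index r N l))) {..<d})"
    if "\<pi>' (k, l) = Some m" for k l m d
  proof -
    have "glue r \<pi> N \<pi>' N' (glue_index r N k, glue_index r N l) = Some m"
      using tree_mapping_edge[OF assms(2), of k l] that glue_glue_index[OF assms(3)] by simp
    then show ?thesis
      using assms(1) by (simp add: admissible_def)
  qed
  ultimately show ?thesis
    using assms(2) by (simp add: admissible_def)
qed

lemma extensions_glue:
  assumes "ts \<in> extensions (glue r \<pi> N \<pi>' N', N + N' - 1, i, glue_tuple N xs ys)"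
    and "tree_mapping \<pi> N" "tree_mapping \<pi>' N'" "r < N" "xs r = ys 0" "i1 \<le> i" "i2 \<le> i"
  shows "ts \<in> extensions (\<pi>, N, i1, xs)" and "ts \<circ> glue_index r N \<in> extensions (\<pi>', N', i2, ys)"
proof -
  have adm: "admissible (glue r \<pi> N \<pi>' N') (N + N' - 1) ts"
    and agree: "\<And>j. j < N + N' - 1 \<Longrightarrow> \<forall>k<ns i. ts j k = glue_tuple N xs ys j k"
    using assms(1) by (auto simp: restr_eq_restr_iff)
  have "0 < N'"
    using assms(3) by (rule tree_mapping_pos)
  have "restr (ts j) {..<ns i1} = restr (xs j) {..<ns i1}" if "j < N" for j
    using agree[of j] that \<open>0 < N'\<close> ns_mono[OF assms(6)]
    by (auto simp: restr_eq_restr_iff glue_tuple_def)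
  with admissible_glue_left[OF adm assms(2,3)] show "ts \<in> extensions (\<pi>, N, i1, xs)"
    by simp
  have "restr (ts (glue_index r N j)) {..<ns i2} = restr (ys j) {..<ns i2}" if "j < N'" for j
    using agree[OF glue_index_less[OF assms(4) that]] ns_mono[OF assms(7)]
    by (auto simp: restr_eq_restr_iff glue_tuple_glue_index[of r N xs ys, OF assms(4,5)])
  with admissible_glue_right[OF adm assms(3,4)] show "ts \<circ> glue_index r N \<in> extensions (\<pi>', N', i2, ys)"
    by simp
qed

lemma root_extensions_Int:
  assumes "admissible \<pi>1 N1 xs" "admissible \<pi>2 N2 zs" "xs 0 = zs 0"
  shows "\<exists>\<pi> N i ys. ys 0 = xs 0 \<and> admissible \<pi> N ys \<and> N \<le> ns i \<and>
    (\<lambda>ts. ts 0) ` extensions (\<pi>, N, i, ys) \<subseteq>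
      (\<lambda>ts. ts 0) ` extensions (\<pi>1, N1, i1, xs) \<inter> (\<lambda>ts. ts 0) ` extensions (\<pi>2, N2, i2, zs)"
proof -
  have tree: "tree_mapping \<pi>1 N1" "tree_mapping \<pi>2 N2"
    using assms(1,2) by (simp_all add: admissible_def)
  then have "0 < N1"
    by (simp add: tree_mapping_pos)
  define i where "i = i1 + i2 + N1 + N2"
  let ?c = "(glue 0 \<pi>1 N1 \<pi>2 N2, N1 + N2 - 1, i, glue_tuple N1 xs zs)"
  have "(\<lambda>ts. ts 0) ` extensions ?c \<subseteq>
      (\<lambda>ts. ts 0) ` extensions (\<pi>1, N1, i1, xs) \<inter> (\<lambda>ts. ts 0) ` extensions (\<pi>2, N2, i2, zs)"
  proof (rule image_subsetI)
    fix ts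
    assume ts: "ts \<in> extensions ?c"
    have "i1 \<le> i" "i2 \<le> i"
      by (simp_all add: i_def)
    note ext = extensions_glue[OF ts tree \<open>0 < N1\<close> assms(3) this]
    have 1: "ts \<in> extensions (\<pi>1, N1, i1, xs)"
      and 2: "ts \<circ> glue_index 0 N1 \<in> extensions (\<pi>2, N2, i2, zs)"
      by (fact ext)+
    have "ts 0 \<in> (\<lambda>ts. ts 0) ` extensions (\<pi>1, N1, i1, xs)"
      using 1 by blast
    moreover have "(ts \<circ> glue_index 0 N1) 0 \<in> (\<lambda>ts. ts 0) ` extensions (\<pi>2, N2, i2, zs)"
      using 2 by blast
    ultimately show "ts 0 \<in> (\<lambda>ts. ts 0) ` extensions (\<pi>1, N1, i1, xs) \<inter> (\<lambda>ts. ts 0) ` extensions (\<pi>2, N2, i2, zs)"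
      by (simp add: glue_index_def)
  qed
  moreover have "admissible (glue 0 \<pi>1 N1 \<pi>2 N2) (N1 + N2 - 1) (glue_tuple N1 xs zs)"
    using admissible_glue[OF assms(1,2) \<open>0 < N1\<close> assms(3)] .
  moreover have "N1 + N2 - 1 \<le> ns i"
    using le_ns[of i] by (simp add: i_def)
  moreover have "glue_tuple N1 xs zs 0 = xs 0"
    using \<open>0 < N1\<close> by (simp add: glue_tuple_def)
  ultimately show ?thesis
    by (intro exI[of _ "glue 0 \<pi>1 N1 \<pi>2 N2"] exI[of _ "N1 + N2 - 1"] exI[of _ i]
        exI[of _ "glue_tuple N1 xs zs"]) simp
qed

lemma local_base:
  assumes "openin (tau ns C P) W" "y \<in> W"
  shows "\<exists>\<pi> N i ys. ys 0 = y \<and> admissible \<pi> N ys \<and> N \<le> ns i \<and>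
    (\<lambda>ts. ts 0) ` extensions (\<pi>, N, i, ys) \<subseteq> W"
proof -
  have "generate_topology_on (Uset ns C P ` Sset ns C P) W"
    using assms(1) by (simp add: tau_def openin_topology_generated_by_iff)
  then show ?thesis
    using assms(2)
  proof (induction arbitrary: y)
    case Empty
    then show ?case
      by simp
  next
    case (Int a b)
    then have "y \<in> a" "y \<in> b"
      by simp_all
    obtain \<pi>1 N1 i1 xs where 1: "xs 0 = y" "admissible \<pi>1 N1 xs"
      "(\<lambda>ts. ts 0) ` extensions (\<pi>1, N1, i1, xs) \<subseteq> a"
      using Int.IH(1)[OF \<open>y \<in> a\<close>] by blast
    obtain \<pi>2 N2 i2 zs where 2: "zs 0 = y" "admissible \<pi>2 N2 zs"
      "(\<lambda>ts. ts 0) ` extensions (\<pi>2, N2, i2, zs) \<subseteq> b"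
      using Int.IH(2)[OF \<open>y \<in> b\<close>] by blast
    have "xs 0 = zs 0"
      using 1(1) 2(1) by simp
    from root_extensions_Int[OF 1(2) 2(2) this, of i1 i2]
    obtain \<pi> N i ys where ys: "ys 0 = xs 0" "admissible \<pi> N ys" "N \<le> ns i"
      "(\<lambda>ts. ts 0) ` extensions (\<pi>, N, i, ys) \<subseteq>
        (\<lambda>ts. ts 0) ` extensions (\<pi>1, N1, i1, xs) \<inter> (\<lambda>ts. ts 0) ` extensions (\<pi>2, N2, i2, zs)"
      by blast
    have "(\<lambda>ts. ts 0) ` extensions (\<pi>, N, i, ys) \<subseteq> a \<inter> b"
      using ys(4) 1(3) 2(3) by blast
    with ys(1-3) 1(1) show ?case
      by (intro exI[of _ \<pi>] exI[of _ N] exI[of _ i] exI[of _ ys]) simp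
  next
    case (UN K)
    then obtain k where k: "k \<in> K" "y \<in> k"
      by blast
    obtain \<pi> N i ys where ys: "ys 0 = y" "admissible \<pi> N ys" "N \<le> ns i"
      "(\<lambda>ts. ts 0) ` extensions (\<pi>, N, i, ys) \<subseteq> k"
      using UN.IH[OF k] by blast
    have "(\<lambda>ts. ts 0) ` extensions (\<pi>, N, i, ys) \<subseteq> \<Union>K"
      using ys(4) k(1) by blast
    with ys(1-3) show ?case
      by blast
  next
    case (Basis s)
    then obtain \<rho> where \<rho>: "\<rho> \<in> Sset ns C P" "s = Uset ns C P \<rho>"
      by blast
    with Basis.prems obtain \<pi> N i ys where "ys 0 = y" "admissible \<pi> N ys" "N \<le> ns i"
      "Uset ns C P \<rho> = (\<lambda>ts. ts 0) ` extensions (\<pi>, N, i, ys)"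
      using Uset_eq_root_extensions[of \<rho> y] by blast
    with \<rho>(2) show ?case
      by (intro exI[of _ \<pi>] exI[of _ N] exI[of _ i] exI[of _ ys]) simp
  qed
qed

lemma admissible_swap_root:
  assumes "admissible \<pi> N xs" "\<pi> (0, 1) \<noteq> None"
  shows "admissible (swap_root \<pi>) N (xs \<circ> flip01)"
proof -
  have tree: "tree_mapping \<pi> N"
    using assms(1) by (simp add: admissible_def)
  have N: "2 \<le> N"
    using tree_mapping_edge[OF tree assms(2)] by simp
  have "xs (flip01 j) \<in> Hset ns C" if "j < N" for j
    using assms(1) that flip01_less[OF N, of j] by (simp add: admissible_def)
  moreover have "in_Tstar P m d (restr (sadd (xs (flip01 k)) (xs (flip01 l))) {..<d})"
    if "swap_root \<pi> (k, l) = Some m" for k l m d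
  proof (cases "{k, l} = {0, 1}")
    case True
    then have "\<pi> (k, l) = Some m"
      using that by (simp add: swap_root_def)
    moreover have "flip01 k = l" "flip01 l = k"
      using flip01_pair[OF True] by simp_all
    ultimately show ?thesis
      using assms(1) sadd_commute[of "xs l" "xs k"] by (simp add: admissible_def)
  next
    case False
    then have "\<pi> (flip01 k, flip01 l) = Some m"
      using that by (simp add: swap_root_apply)
    then show ?thesis
      using assms(1) by (simp add: admissible_def)
  qed
  ultimately show ?thesis
    using tree_mapping_swap_root[OF tree assms(2)] by (simp add: admissible_def)
qed

lemma extensions_swap_root:
  assumes "ts \<in> extensions (\<pi>, N, i, xs)" "\<pi> (0, 1) \<noteq> None"
  shows "ts \<circ> flip01 \<in> extensions (swap_root \<pi>, N, i, xs \<circ> flip01)"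
proof -
  have "2 \<le> N"
    using assms tree_mapping_edge[of \<pi> N 0 1] by (simp add: admissible_def)
  then have "restr (ts (flip01 j)) {..<ns i} = restr (xs (flip01 j)) {..<ns i}" if "j < N" for j
    using assms(1) that flip01_less by simp
  then show ?thesis
    using assms admissible_swap_root by simp
qed

lemma coordinate_one_extensions:
  assumes "\<pi> (0, 1) \<noteq> None"
  shows "(\<lambda>ts. ts 1) ` extensions (\<pi>, N, i, xs)
    = (\<lambda>ts. ts 0) ` extensions (swap_root \<pi>, N, i, xs \<circ> flip01)"
proof (intro equalityI image_subsetI)
  fix ts
  assume "ts \<in> extensions (\<pi>, N, i, xs)"
  then have "ts \<circ> flip01 \<in> extensions (swap_root \<pi>, N, i, xs \<circ> flip01)"
    using extensions_swap_root assms by blast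
  then show "ts 1 \<in> (\<lambda>ts. ts 0) ` extensions (swap_root \<pi>, N, i, xs \<circ> flip01)"
    by (rule image_eqI[rotated]) simp
next
  fix ts
  assume "ts \<in> extensions (swap_root \<pi>, N, i, xs \<circ> flip01)"
  moreover have "swap_root \<pi> (0, 1) \<noteq> None"
    using assms by (simp only: swap_root_01 not_False_eq_True)
  ultimately have "ts \<circ> flip01 \<in> extensions (swap_root (swap_root \<pi>), N, i, xs \<circ> flip01 \<circ> flip01)"
    by (rule extensions_swap_root)
  then have "ts \<circ> flip01 \<in> extensions (\<pi>, N, i, xs)"
    by (simp only: swap_root_swap_root comp_assoc transpose_comp_involutory comp_id)
  then show "ts 0 \<in> (\<lambda>ts. ts 1) ` extensions (\<pi>, N, i, xs)"
    by (rule image_eqI[rotated]) simp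
qed

fun proper :: "config \<Rightarrow> bool" where
  "proper (\<pi>, N, i, xs) \<longleftrightarrow> admissible \<pi> N xs \<and> N \<le> ns i \<and> \<pi> (0, 1) \<noteq> None"

lemma openin_coordinate_extensions:
  assumes "proper c" "r \<le> 1"
  shows "openin (tau ns C P) ((\<lambda>ts. ts r) ` extensions c)"
proof -
  obtain \<pi> N i xs where c: "c = (\<pi>, N, i, xs)"
    by (cases c)
  show ?thesis
  proof (cases "r = 0")
    case True
    with assms(1) c show ?thesis
      using openin_extensions_root by simp
  next
    case False
    then have "r = 1"
      using assms(2) by simp
    have "\<pi> (0, 1) \<noteq> None" "N \<le> ns i" "admissible (swap_root \<pi>) N (xs \<circ> flip01)"
      using assms(1) c admissible_swap_root by simp_all
    then have "openin (tau ns C P) ((\<lambda>ts. ts 0) ` extensions (swap_root \<pi>, N, i, xs \<circ> flip01))"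
      using openin_extensions_root by blast
    then show ?thesis
      unfolding c \<open>r = 1\<close> coordinate_one_extensions[of \<pi>, OF \<open>\<pi> (0, 1) \<noteq> None\<close>] .
  qed
qed

section \<open>Fusion\<close>

fun refined_by :: "config \<Rightarrow> config \<Rightarrow> bool" where
  "refined_by (\<pi>, N, i, xs) (\<pi>', N', i', xs') \<longleftrightarrow>
     N \<le> N' \<and> i < i' \<and> extensions (\<pi>', N', i', xs') \<subseteq> extensions (\<pi>, N, i, xs)"

lemma refinement_into_open:
  assumes "proper (\<pi>, N, i, xs)" "r \<le> 1" "openin (tau ns C P) W"
    and ys: "ys \<in> extensions (\<pi>, N, i, xs)" "ys r \<in> W"
  shows "\<exists>c'. proper c' \<and> refined_by (\<pi>, N, i, xs) c' \<and> (\<forall>ts\<in>extensions c'. ts r \<in> W)"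
proof -
  obtain \<pi>2 N2 i2 zs where zs: "zs 0 = ys r" "admissible \<pi>2 N2 zs" "N2 \<le> ns i2"
    "(\<lambda>ts. ts 0) ` extensions (\<pi>2, N2, i2, zs) \<subseteq> W"
    using local_base[OF assms(3) ys(2)] by blast
  have tree: "tree_mapping \<pi> N" "tree_mapping \<pi>2 N2"
    using assms(1) zs(2) by (simp_all add: admissible_def)
  have "1 < N"
    using assms(1) tree_mapping_edge[OF tree(1), of 0 1] by simp
  have "r < N" "0 < N2"
    using \<open>1 < N\<close> assms(2) tree_mapping_pos[OF tree(2)] by simp_all
  define i' where "i' = Suc (i + i2 + N + N2)"
  define c' where "c' = (glue r \<pi> N \<pi>2 N2, N + N2 - 1, i', glue_tuple N ys zs)"
  have "admissible (glue r \<pi> N \<pi>2 N2) (N + N2 - 1) (glue_tuple N ys zs)"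
    using admissible_glue[OF _ zs(2) \<open>r < N\<close>] ys(1) zs(1) by simp
  moreover have "N + N2 - 1 \<le> ns i'"
    using le_ns[of i'] by (simp add: i'_def)
  ultimately have "proper c'"
    using \<open>1 < N\<close> assms(1) by (simp add: c'_def)
  moreover have "ts \<in> extensions (\<pi>, N, i, xs) \<and> ts r \<in> W" if "ts \<in> extensions c'" for ts
  proof -
    have "ys r = zs 0" "i \<le> i'" "i2 \<le> i'"
      using zs(1) by (simp_all add: i'_def)
    from extensions_glue[OF that[unfolded c'_def] tree \<open>r < N\<close> this]
    have "ts \<in> extensions (\<pi>, N, i, ys)" "ts \<circ> glue_index r N \<in> extensions (\<pi>2, N2, i2, zs)"
      by simp_all
    then have "ts \<in> extensions (\<pi>, N, i, xs)" "(ts \<circ> glue_index r N) 0 \<in> W"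
      using extensions_mono[OF ys(1) order_refl] zs(4) by blast+
    then show ?thesis
      by (simp add: glue_index_def)
  qed
  moreover have "N \<le> N + N2 - 1" "i < i'"
    using \<open>0 < N2\<close> by (simp_all add: i'_def)
  then have "refined_by (\<pi>, N, i, xs) c'" if "extensions c' \<subseteq> extensions (\<pi>, N, i, xs)"
    using that unfolding c'_def by (simp del: extensions.simps)
  ultimately show ?thesis
    by blast
qed

lemma refinement_avoiding:
  assumes "proper c" "r \<le> 1" "nowhere_dense_in (tau ns C P) F"
  shows "\<exists>c'. proper c' \<and> refined_by c c' \<and> (\<forall>ts\<in>extensions c'. ts r \<notin> F)"
proof -
  let ?T = "tau ns C P"
  obtain \<pi> N i xs where c: "c = (\<pi>, N, i, xs)"
    by (cases c)
  define W where "W = (\<lambda>ts. ts r) ` extensions c - ?T closure_of F"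
  have coord: "openin ?T ((\<lambda>ts. ts r) ` extensions c)"
    by (rule openin_coordinate_extensions[OF assms(1,2)])
  then have "openin ?T W"
    unfolding W_def by (intro openin_diff closedin_closure_of)
  have "W \<noteq> {}"
  proof
    assume "W = {}"
    then have "(\<lambda>ts. ts r) ` extensions c \<subseteq> ?T interior_of (?T closure_of F)"
      using coord by (intro interior_of_maximal) (auto simp: W_def)
    moreover have "xs r \<in> (\<lambda>ts. ts r) ` extensions c"
      using assms(1) c by simp
    ultimately show False
      using assms(3) by (auto simp: nowhere_dense_in_def)
  qed
  then obtain ys where "ys \<in> extensions c" "ys r \<in> W"
    by (auto simp: W_def)
  then obtain c' where "proper c'" "refined_by c c'" "\<forall>ts\<in>extensions c'. ts r \<in> W"
    using refinement_into_open[OF _ assms(2) \<open>openin ?T W\<close>] assms(1) c by blast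
  moreover have "F \<subseteq> ?T closure_of F"
    using assms(3) closure_of_subset by (auto simp: nowhere_dense_in_def)
  ultimately show ?thesis
    unfolding W_def by blast
qed

lemma fusion:
  assumes "\<And>k. proper (c k)" and "\<And>k. refined_by (c k) (c (Suc k))"
  shows "\<exists>Y. \<forall>k. Y \<in> extensions (c k)"
proof -
  define \<pi>s where "\<pi>s k = fst (c k)" for k
  define Ns where "Ns k = fst (snd (c k))" for k
  define lv where "lv k = fst (snd (snd (c k)))" for k
  define xss where "xss k = snd (snd (snd (c k)))" for k
  have c: "c k = (\<pi>s k, Ns k, lv k, xss k)" for k
    by (simp add: \<pi>s_def Ns_def lv_def xss_def)
  have steps: "Ns k \<le> Ns (Suc k)" "lv k < lv (Suc k)" "extensions (c (Suc k)) \<subseteq> extensions (c k)" for k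
    using assms(2)[of k] unfolding c[of k] c[of "Suc k"] by (simp_all del: extensions.simps)
  have Ns_mono: "Ns k \<le> Ns k'" and nested: "extensions (c k') \<subseteq> extensions (c k)" if "k \<le> k'" for k k'
    using lift_Suc_mono_le[of Ns, OF steps(1) that]
      lift_Suc_antimono_le[of "\<lambda>k. extensions (c k)", OF steps(3) that] by simp_all
  have "k \<le> lv k" for k
    using steps(2) by (intro strict_mono_imp_increasing) (simp add: strict_mono_Suc_iff)
  have xss: "xss k' \<in> extensions (c k)" if "k \<le> k'" for k k'
    using assms(1)[of k'] nested[OF that] by (auto simp: c)
  have "restr (xss k' j) {..<ns (lv k)} = restr (xss k j) {..<ns (lv k)}" if "j < Ns k" "k \<le> k'" for j k k'
    using xss[OF that(2)] that(1) by (simp add: c)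
  then have "\<exists>g. \<forall>k. j < Ns k \<longrightarrow> restr g {..<ns (lv k)} = restr (xss k j) {..<ns (lv k)}" for j
    by (rule coherent_limit)
  then obtain Y where Y: "\<And>j k. j < Ns k \<Longrightarrow> restr (Y j) {..<ns (lv k)} = restr (xss k j) {..<ns (lv k)}"
    by metis
  have "admissible (\<pi>s k) (Ns k) Y" for k
  proof (rule admissible_if_prefixes)
    show "tree_mapping (\<pi>s k) (Ns k)"
      using assms(1)[of k] by (simp add: c admissible_def)
    fix d
    have "d \<le> ns (lv (k + d))"
      using \<open>k + d \<le> lv (k + d)\<close> le_ns[of "lv (k + d)"] by simp
    then have "restr (xss (k + d) j) {..<d} = restr (Y j) {..<d}" if "j < Ns k" for j
      using Y[of j "k + d"] Ns_mono[of k "k + d"] that by (auto simp: restr_eq_restr_iff)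
    moreover have "admissible (\<pi>s k) (Ns k) (xss (k + d))"
      using xss[of k "k + d"] by (simp add: c)
    ultimately show "\<exists>zs. admissible (\<pi>s k) (Ns k) zs \<and> (\<forall>j<Ns k. restr (zs j) {..<d} = restr (Y j) {..<d})"
      by blast
  qed
  then have "Y \<in> extensions (c k)" for k
    using Y[of _ k] by (simp add: c)
  then show ?thesis
    by blast
qed

lemma extension_avoiding_sequence:
  fixes F :: "nat \<Rightarrow> (nat \<Rightarrow> bool) set"
  assumes "proper c" and "\<And>n. nowhere_dense_in (tau ns C P) (F n)"
  shows "\<exists>Y\<in>extensions c. \<forall>n. Y 0 \<notin> F n \<and> Y 1 \<notin> F n"
proof -
  define Q where "Q n c' \<longleftrightarrow> proper c' \<and> (n = 0 \<longrightarrow> c' = c)" for n :: nat and c'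
  define R where "R n c' c'' \<longleftrightarrow> refined_by c' c'' \<and> (\<forall>ts\<in>extensions c''. ts (n mod 2) \<notin> F (n div 2))"
    for n c' c''
  have "\<exists>cs. \<forall>n. Q n (cs n) \<and> R n (cs n) (cs (Suc n))"
  proof (rule dependent_nat_choice)
    show "\<exists>x. Q 0 x"
      using assms(1) unfolding Q_def by blast
    show "\<exists>y. Q (Suc n) y \<and> R n x y" if "Q n x" for x n
      using refinement_avoiding[of x "n mod 2" "F (n div 2)"] that assms(2) by (auto simp: Q_def R_def)
  qed
  then obtain cs where cs: "\<forall>n. Q n (cs n) \<and> R n (cs n) (cs (Suc n))"
    by blast
  then obtain Y where Y: "\<And>k. Y \<in> extensions (cs k)"
    using fusion[of cs] by (auto simp: Q_def R_def)
  have avoid: "Y (n mod 2) \<notin> F (n div 2)" for n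
    using cs Y[of "Suc n"] by (auto simp: R_def)
  have "Y 0 \<notin> F n \<and> Y 1 \<notin> F n" for n
    using avoid[of "2 * n"] avoid[of "2 * n + 1"] by simp
  moreover have "Y \<in> extensions c"
    using Y[of 0] cs by (simp add: Q_def)
  ultimately show ?thesis
    by blast
qed

section \<open>The initial configuration\<close>

lemma admissible_single_edge:
  assumes "x \<in> Hset ns C" "P m \<noteq> {}"
  shows "admissible (single_edge m) 2 (\<lambda>_. x)"
proof -
  obtain u where "u \<in> P m"
    using assms(2) by blast
  moreover have "sadd x x = sadd u u"
    by (simp add: sadd_self)
  ultimately have "sadd x x \<in> Pstar P m"
    unfolding Pstar_def by blast
  then have "in_Tstar P m d (restr (sadd x x) {..<d})" for d
    by (auto simp: in_Tstar_def)
  then show ?thesis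
    using assms(1) tree_mapping_single_edge by (auto simp: admissible_def single_edge_def split: if_splits)
qed

lemma admissible_twin_tree:
  assumes "admissible \<pi> N zs" "P m \<noteq> {}"
  shows "admissible (twin_tree m \<pi> N) (2 * N) (twin_tuple N zs)"
proof -
  have "0 < N"
    using assms(1) tree_mapping_pos unfolding admissible_def by blast
  then have "zs 0 \<in> Hset ns C"
    using assms(1) by (simp add: admissible_def)
  then have "admissible (glue 0 (single_edge m) 2 \<pi> N) (N + 1) (glue_tuple 2 (\<lambda>_. zs 0) zs)"
    using admissible_glue[OF admissible_single_edge assms(1), of "zs 0" m 0] assms(2) by simp
  from admissible_glue[OF this assms(1), of 1]
  show ?thesis
    using \<open>0 < N\<close> by (simp add: twin_tree_def twin_tuple_def glue_tuple_def mult_2)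
qed

lemma extensions_twin_tree:
  assumes "ts \<in> extensions (twin_tree m \<pi> N, 2 * N, i, twin_tuple N zs)" "tree_mapping \<pi> N" "i' \<le> i"
  shows "ts \<circ> glue_index 0 2 \<in> extensions (\<pi>, N, i', zs)"
    and "ts \<circ> glue_index 1 (N + 1) \<in> extensions (\<pi>, N, i', zs)"
proof -
  have "0 < N"
    using assms(2) by (rule tree_mapping_pos)
  have tree1: "tree_mapping (glue 0 (single_edge m) 2 \<pi> N) (N + 1)"
    using tree_mapping_glue[OF tree_mapping_single_edge assms(2), of 0] by simp
  have "ts \<in> extensions (glue 1 (glue 0 (single_edge m) 2 \<pi> N) (N + 1) \<pi> N, N + 1 + N - 1, i,
      glue_tuple (N + 1) (glue_tuple 2 (\<lambda>_. zs 0) zs) zs)"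
    using assms(1) by (simp add: twin_tree_def twin_tuple_def mult_2)
  from extensions_glue[OF this tree1 assms(2), of i' i'] \<open>0 < N\<close> assms(3)
  have "ts \<in> extensions (glue 0 (single_edge m) 2 \<pi> N, 2 + N - 1, i', glue_tuple 2 (\<lambda>_. zs 0) zs)"
    and "ts \<circ> glue_index 1 (N + 1) \<in> extensions (\<pi>, N, i', zs)"
    by (simp_all add: glue_tuple_def)
  from extensions_glue(2)[OF this(1) tree_mapping_single_edge assms(2), of i' i'] this(2)
  show "ts \<circ> glue_index 0 2 \<in> extensions (\<pi>, N, i', zs)"
    and "ts \<circ> glue_index 1 (N + 1) \<in> extensions (\<pi>, N, i', zs)"
    by simp_all
qed

end

locale translation_tree_topology = tree_topology +
  assumes C_subset: "\<And>i. C i \<subseteq> fs (block ns i)"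
    and C_translates_meet:
      "\<And>i s. \<forall>k\<le>ns i. s k \<in> fs (block ns i) \<Longrightarrow> \<exists>t. \<forall>k\<le>ns i. t \<in> (\<lambda>c. sadd c (s k)) ` C i"
begin

lemma blockwise_translate: "\<exists>y. \<forall>b j. j \<le> ns b \<longrightarrow> restr (sadd y (E j)) (block ns b) \<in> C b"
proof -
  have "\<exists>t. \<forall>k\<le>ns b. t \<in> (\<lambda>c. sadd c (restr (E k) (block ns b))) ` C b" for b
    by (rule C_translates_meet) (simp add: restr_in_fs)
  then have "\<forall>b. \<exists>t. \<forall>k\<le>ns b. t \<in> (\<lambda>c. sadd c (restr (E k) (block ns b))) ` C b"
    by blast
  from choice[OF this] obtain t
    where t: "\<And>b k. k \<le> ns b \<Longrightarrow> t b \<in> (\<lambda>c. sadd c (restr (E k) (block ns b))) ` C b"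
    by blast
  have t_block: "d \<in> block ns b" if "t b d" for b d
  proof -
    obtain c where "c \<in> C b" "t b = sadd c (restr (E 0) (block ns b))"
      using t[of 0 b] by blast
    then show ?thesis
      using that C_subset[of b] by (auto simp: fs_def restr_def sadd_def)
  qed
  define y where "y d = (\<exists>b. t b d)" for d
  have "restr (sadd y (E j)) (block ns b) \<in> C b" if j: "j \<le> ns b" for j b
  proof -
    obtain c where c: "c \<in> C b" "t b = sadd c (restr (E j) (block ns b))"
      using t[OF j] by blast
    have y_block: "y d = t b d" if "d \<in> block ns b" for d
    proof -
      have "b' = b" if "t b' d" for b'
        using t_block[OF that] \<open>d \<in> block ns b\<close> by (rule block_unique)
      then show ?thesis
        by (auto simp: y_def)
    qed
    have "restr (sadd y (E j)) (block ns b) d = c d" for d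
    proof (cases "d \<in> block ns b")
      case True
      then show ?thesis
        using y_block[OF True] c(2) by (auto simp: restr_def sadd_def)
    next
      case False
      then show ?thesis
        using c(1) C_subset[of b] by (auto simp: restr_def fs_def)
    qed
    then have "restr (sadd y (E j)) (block ns b) = c"
      by (rule ext)
    with c(1) show ?thesis
      by simp
  qed
  then show ?thesis
    by blast
qed

lemma common_translate_in_Hset:
  assumes "N \<le> ns i"
    and "\<And>j. j < N \<Longrightarrow> \<exists>h\<in>Hset ns C. restr h {..<ns i} = restr (sadd a (E j)) {..<ns i}"
  shows "\<exists>x. restr x {..<ns i} = restr a {..<ns i} \<and> (\<forall>j<N. sadd x (E j) \<in> Hset ns C)"
proof -
  obtain y where y: "\<And>b j. j \<le> ns b \<Longrightarrow> restr (sadd y (E j)) (block ns b) \<in> C b"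
    using blockwise_translate by blast
  define x where "x d = (if d < ns i then a d else y d)" for d
  have "restr (sadd x (E j)) (block ns b) \<in> C b" if "j < N" for j b
  proof (cases "b < i")
    case True
    obtain h where h: "h \<in> Hset ns C" "restr h {..<ns i} = restr (sadd a (E j)) {..<ns i}"
      using assms(2)[OF \<open>j < N\<close>] by blast
    have "d < ns i" if "d \<in> block ns b" for d
      using block_subset_lessThan[OF True] that by blast
    then have "restr (sadd x (E j)) (block ns b) = restr h (block ns b)"
      using h(2) by (simp add: restr_eq_restr_iff x_def sadd_def)
    moreover have "restr h (block ns b) \<in> C b"
      using h(1) by (simp add: Hset_def)
    ultimately show ?thesis
      by simp
  next
    case False
    then have "j \<le> ns b"
      using \<open>j < N\<close> assms(1) ns_mono[of i b] by simp
    have "\<not> d < ns i" if "d \<in> block ns b" for d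
      using that False ns_mono[of i b] by (simp add: block_def)
    then have "restr (sadd x (E j)) (block ns b) = restr (sadd y (E j)) (block ns b)"
      by (simp add: restr_eq_restr_iff x_def sadd_def)
    with y[OF \<open>j \<le> ns b\<close>] show ?thesis
      by simp
  qed
  then have "\<forall>j<N. sadd x (E j) \<in> Hset ns C"
    by (simp add: Hset_def)
  moreover have "restr x {..<ns i} = restr a {..<ns i}"
    by (simp add: restr_eq_restr_iff x_def)
  ultimately show ?thesis
    by blast
qed

lemma shift_across_cut:
  assumes adm: "admissible \<pi> N ws" and "N \<le> ns i" and "ws 0 = ws 1" and "\<pi> (0, 1) = Some m"
    and side: "1 \<in> S" "0 \<notin> S"
    and cut: "\<And>k l m'. \<pi> (k, l) = Some m' \<Longrightarrow> (k, l) \<noteq> (0, 1) \<Longrightarrow> k \<in> S \<longleftrightarrow> l \<in> S"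
    and p: "p \<in> Pstar P m" "restr p {..<ns i} = (\<lambda>_. False)"
  shows "\<exists>ts\<in>extensions (\<pi>, N, i, ws). ts 1 = sadd (ts 0) p"
proof -
  define E where "E j = sadd (sadd (ws 0) (ws j)) (if j \<in> S then p else (\<lambda>_. False))" for j
  have p_low: "\<not> p d" if "d < ns i" for d
    using fun_cong[OF p(2), of d] that by (simp add: restr_def)
  have "\<exists>h\<in>Hset ns C. restr h {..<ns i} = restr (sadd (ws 0) (E j)) {..<ns i}" if "j < N" for j
  proof
    show "ws j \<in> Hset ns C"
      using adm that by (simp add: admissible_def)
    show "restr (ws j) {..<ns i} = restr (sadd (ws 0) (E j)) {..<ns i}"
      using p_low by (auto simp: restr_eq_restr_iff E_def sadd_def)
  qed
  then obtain x where x: "restr x {..<ns i} = restr (ws 0) {..<ns i}" "\<forall>j<N. sadd x (E j) \<in> Hset ns C"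
    using common_translate_in_Hset[OF assms(2)] by blast
  define ts where "ts j = sadd x (E j)" for j
  have sum: "sadd (ts k) (ts l) =
      (if k \<in> S \<longleftrightarrow> l \<in> S then sadd (ws k) (ws l) else sadd (sadd (ws k) (ws l)) p)" for k l
    by (auto simp: ts_def E_def sadd_def fun_eq_iff)
  have "in_Tstar P m' d (restr (sadd (ts k) (ts l)) {..<d})" if "\<pi> (k, l) = Some m'" for k l m' d
  proof (cases "(k, l) = (0, 1)")
    case True
    then have "sadd (ts k) (ts l) = p" "m' = m"
      using sum[of 0 1] side \<open>ws 0 = ws 1\<close> that assms(4) by (auto simp: sadd_def)
    then show ?thesis
      using p(1) by (auto simp: in_Tstar_def)
  next
    case False
    then show ?thesis
      using sum[of k l] cut[OF that False] adm that by (simp add: admissible_def)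
  qed
  then have "admissible \<pi> N ts"
    using adm x(2) by (simp add: admissible_def ts_def)
  moreover have "restr (ts j) {..<ns i} = restr (ws j) {..<ns i}" for j
    using x(1) p_low by (auto simp: restr_eq_restr_iff ts_def E_def sadd_def)
  moreover have "ts 1 = sadd (ts 0) p"
    using side \<open>ws 0 = ws 1\<close> by (auto simp: ts_def E_def sadd_def fun_eq_iff)
  ultimately show ?thesis
    by auto
qed

lemma twin_extension_splitting:
  assumes "admissible \<pi> N zs" "P m \<noteq> {}" "perfect_in cantor_top (P m)" "2 * N \<le> ns i"
  shows "\<exists>ts i0. i \<le> i0 \<and> ts \<in> extensions (twin_tree m \<pi> N, 2 * N, i, twin_tuple N zs) \<and>
    restr (ts 0) {..<ns i0} \<noteq> restr (ts 1) {..<ns i0}"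
proof -
  have tree: "tree_mapping \<pi> N"
    using assms(1) by (simp add: admissible_def)
  then have "0 < N"
    by (rule tree_mapping_pos)
  \<comment> \<open>Shifting the side of vertex 1 by \<open>p = u + v\<close>, for distinct \<open>u, v \<in> P m\<close> that agree below
    \<open>ns i\<close>, keeps all prefixes below \<open>ns i\<close> but separates coordinates 0 and 1.\<close>
  obtain u where u: "u \<in> P m"
    using assms(2) by blast
  obtain v where v: "v \<in> P m" "v \<noteq> u" "restr v {..<ns i} = restr u {..<ns i}"
    using perfect_in_cantor_split[OF assms(3) u] by blast
  define p where "p = sadd u v"
  have "\<forall>k<ns i. v k = u k"
    using v(3) by (simp add: restr_eq_restr_iff)
  then have p: "p \<in> Pstar P m" "restr p {..<ns i} = (\<lambda>_. False)"
    using u v(1) by (auto simp: p_def Pstar_def restr_def sadd_def fun_eq_iff)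
  obtain d where "p d"
    using v(2) by (auto simp: p_def sadd_def fun_eq_iff)
  have "\<exists>ts\<in>extensions (twin_tree m \<pi> N, 2 * N, i, twin_tuple N zs). ts 1 = sadd (ts 0) p"
  proof (rule shift_across_cut)
    show "admissible (twin_tree m \<pi> N) (2 * N) (twin_tuple N zs)"
      by (rule admissible_twin_tree[OF assms(1,2)])
    show "twin_tuple N zs 0 = twin_tuple N zs 1"
      using \<open>0 < N\<close> by (simp add: twin_tuple_def glue_tuple_def)
    show "twin_tree m \<pi> N (0, 1) = Some m"
      using \<open>0 < N\<close> by (rule twin_tree_01)
    show "1 \<in> insert 1 {N + 1..}" "0 \<notin> insert 1 {N + 1..}"
      by simp_all
    show "k \<in> insert 1 {N + 1..} \<longleftrightarrow> l \<in> insert 1 {N + 1..}"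
      if "twin_tree m \<pi> N (k, l) = Some m'" "(k, l) \<noteq> (0, 1)" for k l m'
      using twin_tree_cut[OF that tree] .
  qed (use p assms(4) in auto)
  then obtain ts where ts: "ts \<in> extensions (twin_tree m \<pi> N, 2 * N, i, twin_tuple N zs)"
    "ts 1 = sadd (ts 0) p"
    by blast
  have "d < ns (i + Suc d)"
    using le_ns[of "i + Suc d"] by simp
  then have "restr (ts 0) {..<ns (i + Suc d)} \<noteq> restr (ts 1) {..<ns (i + Suc d)}"
    using ts(2) \<open>p d\<close> by (auto simp: restr_eq_restr_iff sadd_def)
  with ts(1) show ?thesis
    by (intro exI[of _ ts] exI[of _ "i + Suc d"]) simp
qed

lemma initial_config:
  assumes "P m \<noteq> {}" "perfect_in cantor_top (P m)" "openin (tau ns C P) V" "V \<noteq> {}"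
  shows "\<exists>\<pi> N i xs. proper (\<pi>, N, i, xs) \<and> \<pi> (0, 1) = Some m \<and>
    restr (xs 0) {..<ns i} \<noteq> restr (xs 1) {..<ns i} \<and>
    (\<forall>ts\<in>extensions (\<pi>, N, i, xs). ts 0 \<in> V \<and> ts 1 \<in> V)"
proof -
  obtain x where "x \<in> V"
    using assms(4) by blast
  obtain \<pi> N i' zs where zs: "zs 0 = x" "admissible \<pi> N zs" "N \<le> ns i'"
    "(\<lambda>ts. ts 0) ` extensions (\<pi>, N, i', zs) \<subseteq> V"
    using local_base[OF assms(3) \<open>x \<in> V\<close>] by blast
  have tree: "tree_mapping \<pi> N"
    using zs(2) by (simp add: admissible_def)
  then have "0 < N"
    by (rule tree_mapping_pos)
  define i where "i = i' + 2 * N"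
  have "2 * N \<le> ns i"
    using le_ns[of i] by (simp add: i_def)
  then obtain ts i0 where ts: "i \<le> i0" "ts \<in> extensions (twin_tree m \<pi> N, 2 * N, i, twin_tuple N zs)"
    "restr (ts 0) {..<ns i0} \<noteq> restr (ts 1) {..<ns i0}"
    using twin_extension_splitting[OF zs(2) assms(1,2)] by blast
  have "proper (twin_tree m \<pi> N, 2 * N, i0, ts)"
    using ts(1,2) \<open>2 * N \<le> ns i\<close> ns_mono[OF ts(1)] twin_tree_01[OF \<open>0 < N\<close>] by simp
  moreover have "ts' 0 \<in> V \<and> ts' 1 \<in> V" if "ts' \<in> extensions (twin_tree m \<pi> N, 2 * N, i0, ts)" for ts'
  proof -
    have "ts' \<in> extensions (twin_tree m \<pi> N, 2 * N, i, twin_tuple N zs)"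
      using extensions_mono[OF ts(2,1)] that by blast
    moreover have "i' \<le> i"
      by (simp add: i_def)
    ultimately have "ts' \<circ> glue_index 0 2 \<in> extensions (\<pi>, N, i', zs)"
      "ts' \<circ> glue_index 1 (N + 1) \<in> extensions (\<pi>, N, i', zs)"
      using extensions_twin_tree tree by blast+
    then have "(ts' \<circ> glue_index 0 2) 0 \<in> V" "(ts' \<circ> glue_index 1 (N + 1)) 0 \<in> V"
      using zs(4) by blast+
    then show ?thesis
      by (simp add: glue_index_def)
  qed
  ultimately show ?thesis
    using ts(3) twin_tree_01[OF \<open>0 < N\<close>] by blast
qed

lemma nonmeager_translates_meet:
  assumes "P m \<noteq> {}" "perfect_in cantor_top (P m)"
    and "\<not> meager_in (tau ns C P) B" "baire_property_in (tau ns C P) B"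
  shows "\<exists>x\<in>P m. \<exists>y\<in>P m. x \<noteq> y \<and> translate B x \<inter> translate B y \<noteq> {}"
proof -
  obtain V and F :: "nat \<Rightarrow> (nat \<Rightarrow> bool) set" where V: "openin (tau ns C P) V" "V \<noteq> {}"
    and F: "\<forall>n. nowhere_dense_in (tau ns C P) (F n)" "V - (\<Union>n. F n) \<subseteq> B"
    by (rule nonmeager_Baire_property_comeager_in_open[OF assms(3,4)])
  obtain \<pi> N i xs where c: "proper (\<pi>, N, i, xs)" "\<pi> (0, 1) = Some m"
    "restr (xs 0) {..<ns i} \<noteq> restr (xs 1) {..<ns i}"
    "\<forall>ts\<in>extensions (\<pi>, N, i, xs). ts 0 \<in> V \<and> ts 1 \<in> V"
    using initial_config[OF assms(1,2) V] by blast
  obtain Y where Y: "Y \<in> extensions (\<pi>, N, i, xs)" "\<forall>n. Y 0 \<notin> F n \<and> Y 1 \<notin> F n"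
    using extension_avoiding_sequence[of "(\<pi>, N, i, xs)" F] c(1) F(1) by blast
  have "Y 0 \<in> V - (\<Union>n. F n)" "Y 1 \<in> V - (\<Union>n. F n)"
    using Y c(4) by blast+
  then have "Y 0 \<in> B" "Y 1 \<in> B"
    using F(2) by blast+
  moreover have "Y 0 \<noteq> Y 1"
  proof
    assume "Y 0 = Y 1"
    have "1 < N"
      using c(1,2) tree_mapping_edge[of \<pi> N 0 1] by (simp add: admissible_def)
    then have "restr (Y 0) {..<ns i} = restr (xs 0) {..<ns i}" "restr (Y 1) {..<ns i} = restr (xs 1) {..<ns i}"
      using Y(1) by simp_all
    with \<open>Y 0 = Y 1\<close> c(3) show False
      by simp
  qed
  moreover have "sadd (Y 0) (Y 1) \<in> Pstar P m"
    using Y(1) c(2) by (intro Pstar_if_in_Tstar[of P m, OF assms(2)]) (simp add: admissible_def)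
  ultimately show ?thesis
    by (rule translates_meet_if_sadd_in_Pstar)
qed

end

theorem proposition2p7:
  fixes ns :: "nat \<Rightarrow> nat" and C :: "nat \<Rightarrow> (nat \<Rightarrow> bool) set"
    and P :: "nat \<Rightarrow> (nat \<Rightarrow> bool) set" and B :: "(nat \<Rightarrow> bool) set" and m :: nat
  assumes "ns 0 = 0" and "strict_mono ns"
    and "\<forall>i. C i \<subseteq> fs (block ns i)"
    and "\<forall>i s. (\<forall>k\<le>ns i. s k \<in> fs (block ns i)) \<longrightarrow>
           (\<exists>t. \<forall>k\<le>ns i. t \<in> (\<lambda>c. sadd c (s k)) ` C i) \<and>
           (\<exists>t. \<forall>k\<le>ns i. t \<in> (\<lambda>c. sadd c (s k)) ` (fs (block ns i) - C i))"
    and "\<forall>j. P j \<noteq> {} \<and> perfect_in cantor_top (P j)"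
    and "B \<subseteq> Hset ns C"
    and "\<not> meager_in (tau ns C P) B"
    and "baire_property_in (tau ns C P) B"
  shows "\<exists>x\<in>P m. \<exists>y\<in>P m. x \<noteq> y \<and> translate B x \<inter> translate B y \<noteq> {}"
proof -
  interpret translation_tree_topology ns C P
  proof unfold_locales
    show "strict_mono ns" "C i \<subseteq> fs (block ns i)" for i
      using assms(2,3) by blast+
    show "\<exists>t. \<forall>k\<le>ns i. t \<in> (\<lambda>c. sadd c (s k)) ` C i" if "\<forall>k\<le>ns i. s k \<in> fs (block ns i)" for i s
      using assms(4)[rule_format, OF that[rule_format]] by (rule conjunct1)
  qed
  have "P m \<noteq> {}" "perfect_in cantor_top (P m)"
    using assms(5) by simp_all
  then show ?thesis
    by (rule nonmeager_translates_meet[OF _ _ assms(7,8)])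
qed

end
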